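(* Let $a>1$, $C_j(n,a)=\binom{n}{j}\left(\frac{1+a}{2}\right)^{n-j}\left(\frac{1-a}{2}\right)^j$, $b_j=-\frac{i}{\sqrt2}(1-\frac{2j}{n})$ and $b=-\frac{ia}{\sqrt2}$. Then for every $f$ in the Fock space $\mathtt{F}(\mathbb{C})$ and every $z\in\mathbb{C}$, $$\lim_{n\to\infty}\sum_{j=0}^nC_j(n,a)\mathcal{W}_{b_j}[f](z)=\mathcal{W}_b[f](z).$$
   Context: $\mathtt{F}(\mathbb{C})$ is the space of entire functions $f$ with $\frac1\pi\int_{\mathbb{C}}|f(z)|^2e^{-|z|^2}d\lambda(z)<\infty$. For $c\in\mathbb{C}$ the Weyl operator is $\mathcal{W}_cf(z)=f(z-c)e^{z\bar c-|c|^2/2}$. *)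

theory Defs
  imports "HOL-Analysis.Analysis"
begin

definition fock_space :: "(complex \<Rightarrow> complex) set" where
  "fock_space = {f. f holomorphic_on UNIV \<and>
     integrable lborel (\<lambda>z::complex. (1 / pi) * (cmod (f z))\<^sup>2 * exp (- (cmod z)\<^sup>2))}"

definition weyl_op :: "complex \<Rightarrow> (complex \<Rightarrow> complex) \<Rightarrow> complex \<Rightarrow> complex" where
  "weyl_op c f z = f (z - c) * exp (z * cnj c - of_real ((cmod c)\<^sup>2 / 2))"

definition Cj :: "nat \<Rightarrow> nat \<Rightarrow> real \<Rightarrow> real" where
  "Cj n j a = real (n choose j) * ((1 + a) / 2) ^ (n - j) * ((1 - a) / 2) ^ j"

end

theory Submission
  imports Defs "HOL-Complex_Analysis.Complex_Analysis"
begin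

text \<open>For real t, the value of the Weyl operator at -i t / sqrt 2 is G(t) for an entire
  function G. Expanding G in its Taylor series turns the weighted sum into the series of c_k m_n(k),
  where m_n(k), the sum of C_j(n,a) (1 - 2j/n)^k, is the k-th moment of S_n / n for a walk S_n of
  n independent steps +1, -1 with signed probabilities (1+a)/2, (1-a)/2. By exchangeability
  E[S_(n+1)^(k+1)] = (n+1) E[e S_(n+1)^k] for a single step e, so after scaling only the term
  carrying E[e] = a survives: m_n(k) tends to a^k, and |m_n(k)| \<le> a^k. Tannery's theorem passes
  the limit through the series, which leaves the Taylor series of G at a.\<close>

lemma sum_Cj: "(\<Sum>j=0..n. Cj n j a) = 1"
proof -
  have "(\<Sum>j=0..n. Cj n j a) = ((1 - a) / 2 + (1 + a) / 2) ^ n"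
    by (simp add: binomial_ring Cj_def atLeast0AtMost mult_ac)
  also have "\<dots> = 1" by (simp add: add_divide_distrib[symmetric])
  finally show ?thesis .
qed

lemma Cj_Suc_mult_complement:
  "Cj (Suc n) j a * real (Suc n - j) = real (Suc n) * ((1 + a) / 2) * Cj n j a"
proof (cases "j \<le> n")
  case True
  have "real (Suc n - j) * real (Suc n choose j) = real (Suc n) * real (n choose j)"
    using binomial_absorb_comp[of "Suc n" j] by (metis diff_Suc_1 of_nat_mult)
  moreover have "Suc n - j = Suc (n - j)" using True by simp
  ultimately show ?thesis
    unfolding Cj_def by (simp add: mult_ac)
next
  case False
  then show ?thesis by (simp add: Cj_def)
qed

lemma Cj_Suc_Suc_mult:
  "Cj (Suc n) (Suc j) a * real (Suc j) = real (Suc n) * ((1 - a) / 2) * Cj n j a"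
proof -
  have "real (Suc j) * real (Suc n choose Suc j) = real (Suc n) * real (n choose j)"
    using Suc_times_binomial[of j n] by (metis of_nat_mult)
  then show ?thesis
    unfolding Cj_def by (simp add: mult_ac)
qed

lemma Cj_eq_0: "n < j \<Longrightarrow> Cj n j a = 0"
  by (simp add: Cj_def)

lemma sum_Cj_Suc_centered:
  fixes g :: "nat \<Rightarrow> real"
  shows "(\<Sum>j=0..Suc n. Cj (Suc n) j a * (real (Suc n) - 2 * real j) * g j)
       = real (Suc n) * ((1 + a) / 2 * (\<Sum>j=0..n. Cj n j a * g j)
                         - (1 - a) / 2 * (\<Sum>j=0..n. Cj n j a * g (Suc j)))"
proof -
  have "(\<Sum>j=0..Suc n. Cj (Suc n) j a * (real (Suc n) - 2 * real j) * g j)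
      = (\<Sum>j=0..Suc n. Cj (Suc n) j a * real (Suc n - j) * g j)
        - (\<Sum>j=0..Suc n. Cj (Suc n) j a * real j * g j)"
    by (subst sum_subtractf[symmetric], rule sum.cong) (auto simp: of_nat_diff algebra_simps)
  also have "(\<Sum>j=0..Suc n. Cj (Suc n) j a * real (Suc n - j) * g j)
      = (\<Sum>j=0..Suc n. real (Suc n) * ((1 + a) / 2) * Cj n j a * g j)"
    by (simp only: Cj_Suc_mult_complement)
  also have "\<dots> = real (Suc n) * ((1 + a) / 2) * (\<Sum>j=0..n. Cj n j a * g j)"
    by (simp add: Cj_eq_0 sum_distrib_left mult.assoc)
  also have "(\<Sum>j=0..Suc n. Cj (Suc n) j a * real j * g j)
      = (\<Sum>j=0..n. Cj (Suc n) (Suc j) a * real (Suc j) * g (Suc j))"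
    by (subst sum.atLeast0_atMost_Suc_shift) simp
  also have "\<dots> = real (Suc n) * ((1 - a) / 2) * (\<Sum>j=0..n. Cj n j a * g (Suc j))"
    by (simp only: Cj_Suc_Suc_mult sum_distrib_left mult.assoc)
  finally show ?thesis by (simp add: algebra_simps)
qed

text \<open>Moments of one step and of the endpoint n - 2j of the walk, unscaled and divided by n.
  For n = 0 the division gives 1 - 2j/0 = 1, so the scaled moments are 1 there.\<close>

definition step_moment :: "real \<Rightarrow> nat \<Rightarrow> real" where
  "step_moment a k = (1 + a) / 2 + (1 - a) / 2 * (-1) ^ k"

definition walk_moment :: "real \<Rightarrow> nat \<Rightarrow> nat \<Rightarrow> real" where
  "walk_moment a n k = (\<Sum>j=0..n. Cj n j a * (real n - 2 * real j) ^ k)"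

definition scaled_walk_moment :: "real \<Rightarrow> nat \<Rightarrow> nat \<Rightarrow> real" where
  "scaled_walk_moment a n k = (\<Sum>j=0..n. Cj n j a * (1 - 2 * real j / real n) ^ k)"

lemma step_moment_Suc_0 [simp]: "step_moment a (Suc 0) = a"
  by (simp add: step_moment_def field_simps)

lemma abs_step_moment_le:
  assumes "1 \<le> a"
  shows "\<bar>step_moment a k\<bar> \<le> a ^ k"
proof (cases "even k")
  case True
  then show ?thesis using assms by (simp add: step_moment_def one_le_power add_divide_distrib[symmetric])
next
  case False
  then have "a ^ 1 \<le> a ^ k" using assms odd_pos[OF False] by (intro power_increasing) auto
  then show ?thesis using False assms by (simp add: step_moment_def field_simps)
qed

lemma step_moment_binomial:
  "(1 + a) / 2 * (y + 1) ^ k - (1 - a) / 2 * (y - 1) ^ k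
     = (\<Sum>i\<le>k. real (k choose i) * step_moment a (Suc k - i) * y ^ i)"
proof -
  have plus: "(y + 1) ^ k = (\<Sum>i\<le>k. real (k choose i) * y ^ i)"
    using binomial_ring[of y 1 k] by simp
  have minus: "(y - 1) ^ k = (\<Sum>i\<le>k. real (k choose i) * y ^ i * (- 1) ^ (k - i))"
    using binomial_ring[of y "- 1" k] by simp
  show ?thesis
    unfolding plus minus sum_distrib_left sum_subtractf[symmetric]
    by (rule sum.cong) (auto simp: step_moment_def Suc_diff_le field_simps)
qed

lemma walk_moment_0_right [simp]: "walk_moment a n 0 = 1"
  by (simp add: walk_moment_def sum_Cj)

lemma walk_moment_0_left [simp]: "walk_moment a 0 k = 0 ^ k"
  by (simp add: walk_moment_def Cj_def)

lemma walk_moment_Suc_Suc: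
  "walk_moment a (Suc n) (Suc k)
     = real (Suc n) * (\<Sum>i\<le>k. real (k choose i) * step_moment a (Suc k - i) * walk_moment a n i)"
proof -
  define y where "y j = real n - 2 * real j" for j
  have "walk_moment a (Suc n) (Suc k)
      = real (Suc n) * (\<Sum>j=0..n. Cj n j a * ((1 + a) / 2 * (y j + 1) ^ k - (1 - a) / 2 * (y j - 1) ^ k))"
    unfolding walk_moment_def power_Suc mult.assoc[symmetric] sum_Cj_Suc_centered
    by (simp add: y_def sum_distrib_left sum_subtractf algebra_simps)
  also have "\<dots> = real (Suc n) * (\<Sum>j=0..n. \<Sum>i\<le>k. Cj n j a * (real (k choose i) * step_moment a (Suc k - i) * y j ^ i))"
    by (simp only: step_moment_binomial sum_distrib_left)
  also have "\<dots> = real (Suc n) * (\<Sum>i\<le>k. real (k choose i) * step_moment a (Suc k - i) * walk_moment a n i)"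
    by (subst sum.swap) (simp add: walk_moment_def y_def sum_distrib_left mult_ac)
  finally show ?thesis .
qed

lemma abs_walk_moment_le:
  assumes "1 \<le> a"
  shows "\<bar>walk_moment a n k\<bar> \<le> (real n * a) ^ k"
proof (induction k arbitrary: n rule: less_induct)
  case (less k)
  consider "k = 0" | "n = 0" | m k' where "n = Suc m" "k = Suc k'"
    by (metis not0_implies_Suc)
  then show ?case
  proof cases
    case (3 m k')
    have "\<bar>walk_moment a n k\<bar>
        \<le> real n * (\<Sum>i\<le>k'. real (k' choose i) * a ^ (Suc k' - i) * (real m * a) ^ i)"
      unfolding 3 walk_moment_Suc_Suc abs_mult
      using less[of _ m] abs_step_moment_le[OF assms] assms 3
      by (auto intro!: mult_left_mono order.trans[OF sum_abs] sum_mono mult_mono simp: abs_mult)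
    also have "\<dots> = real n * (a * (real m * a + a) ^ k')"
      by (simp add: binomial_ring sum_distrib_left Suc_diff_le mult_ac)
    also have "\<dots> = (real n * a) ^ k"
      by (simp add: 3 algebra_simps)
    finally show ?thesis .
  qed simp_all
qed

lemma walk_moment_eq_scaled: "walk_moment a n k = real n ^ k * scaled_walk_moment a n k"
proof (cases "n = 0")
  case False
  then have "(real n - 2 * real j) ^ k = real n ^ k * (1 - 2 * real j / real n) ^ k" for j
    by (simp add: power_mult_distrib[symmetric] algebra_simps)
  then show ?thesis
    by (simp add: walk_moment_def scaled_walk_moment_def sum_distrib_left mult_ac)
qed (simp add: walk_moment_def scaled_walk_moment_def Cj_def)

lemma scaled_walk_moment_0_right [simp]: "scaled_walk_moment a n 0 = 1"
  by (simp add: scaled_walk_moment_def sum_Cj)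

lemma abs_scaled_walk_moment_le:
  assumes "1 \<le> a"
  shows "\<bar>scaled_walk_moment a n k\<bar> \<le> a ^ k"
proof (cases "n = 0")
  case True
  then show ?thesis using assms by (simp add: scaled_walk_moment_def Cj_def)
next
  case False
  then have "real n ^ k * \<bar>scaled_walk_moment a n k\<bar> \<le> real n ^ k * a ^ k"
    using abs_walk_moment_le[OF assms, of n k]
    by (simp add: walk_moment_eq_scaled abs_mult power_mult_distrib)
  then show ?thesis using False by simp
qed

lemma scaled_walk_moment_Suc_Suc:
  "scaled_walk_moment a (Suc n) (Suc k)
     = (\<Sum>i\<le>k. real (k choose i) * step_moment a (Suc k - i) * scaled_walk_moment a n i
                 * (real n ^ i / real (Suc n) ^ k))"
proof -
  have "real (Suc n) ^ Suc k * scaled_walk_moment a (Suc n) (Suc k)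
      = real (Suc n) ^ Suc k * (\<Sum>i\<le>k. real (k choose i) * step_moment a (Suc k - i)
           * scaled_walk_moment a n i * (real n ^ i / real (Suc n) ^ k))"
    using walk_moment_Suc_Suc[of a n k]
    by (simp add: walk_moment_eq_scaled sum_distrib_left mult_ac del: of_nat_Suc)
  then show ?thesis by (simp only: mult_cancel_left) simp
qed

lemma tendsto_power_divide_Suc_power_0:
  assumes "i < k"
  shows "(\<lambda>n. real n ^ i / real (Suc n) ^ k) \<longlonglongrightarrow> 0"
proof (rule Lim_null_comparison[OF _ LIMSEQ_inverse_real_of_nat])
  have "real n ^ i / real (Suc n) ^ k \<le> inverse (real (Suc n))" for n
  proof -
    have "real n ^ i \<le> real (Suc n) ^ (k - 1)"
      using assms by (intro order.trans[OF power_mono power_increasing]) auto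
    also have "\<dots> = real (Suc n) ^ k / real (Suc n)"
      using assms by (simp add: power_diff)
    finally show ?thesis by (simp add: divide_simps)
  qed
  then show "\<forall>\<^sub>F n in sequentially. norm (real n ^ i / real (Suc n) ^ k) \<le> inverse (real (Suc n))"
    by simp
qed

lemma scaled_walk_moment_tendsto:
  assumes "1 \<le> a"
  shows "(\<lambda>n. scaled_walk_moment a n k) \<longlonglongrightarrow> a ^ k"
proof (induction k)
  case (Suc k)
  have lower_terms: "(\<lambda>n. real (k choose i) * step_moment a (Suc k - i) * scaled_walk_moment a n i
                          * (real n ^ i / real (Suc n) ^ k)) \<longlonglongrightarrow> 0" if "i < k" for i
  proof (rule Lim_null_comparison)
    show "\<forall>\<^sub>F n in sequentially.
            norm (real (k choose i) * step_moment a (Suc k - i) * scaled_walk_moment a n i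
                  * (real n ^ i / real (Suc n) ^ k))
            \<le> \<bar>real (k choose i) * step_moment a (Suc k - i)\<bar> * a ^ i * (real n ^ i / real (Suc n) ^ k)"
      using abs_scaled_walk_moment_le[OF assms]
      by (intro always_eventually allI)
         (auto simp: abs_mult simp del: of_nat_Suc intro!: divide_right_mono mult_right_mono mult_left_mono)
    show "(\<lambda>n. \<bar>real (k choose i) * step_moment a (Suc k - i)\<bar> * a ^ i
                * (real n ^ i / real (Suc n) ^ k)) \<longlonglongrightarrow> 0"
      using tendsto_power_divide_Suc_power_0[OF that] by (rule tendsto_mult_right_zero)
  qed
  have ratio: "(\<lambda>n. real n ^ k / real (Suc n) ^ k) \<longlonglongrightarrow> 1"
    using tendsto_power[OF LIMSEQ_n_over_Suc_n, of k] unfolding power_divide power_one .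
  have top_term:
    "(\<lambda>n. a * scaled_walk_moment a n k * (real n ^ k / real (Suc n) ^ k)) \<longlonglongrightarrow> a * a ^ k * 1"
    by (intro tendsto_mult Suc ratio tendsto_const)
  have split_top: "scaled_walk_moment a (Suc n) (Suc k)
      = (\<Sum>i<k. real (k choose i) * step_moment a (Suc k - i) * scaled_walk_moment a n i
                 * (real n ^ i / real (Suc n) ^ k))
        + a * scaled_walk_moment a n k * (real n ^ k / real (Suc n) ^ k)" for n
    unfolding scaled_walk_moment_Suc_Suc lessThan_Suc_atMost[symmetric] sum.lessThan_Suc
    by simp
  have "(\<lambda>n. scaled_walk_moment a (Suc n) (Suc k)) \<longlonglongrightarrow> 0 + a * a ^ k * 1"
    unfolding split_top
    by (intro tendsto_add tendsto_null_sum lower_terms top_term) simp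
  then have "(\<lambda>n. scaled_walk_moment a (Suc n) (Suc k)) \<longlonglongrightarrow> a ^ Suc k"
    by simp
  then show ?case by (rule LIMSEQ_imp_Suc)
qed simp

lemma tendsto_sum_entire_of_moments:
  fixes G :: "complex \<Rightarrow> complex" and w t :: "nat \<Rightarrow> 'i \<Rightarrow> complex"
  assumes "G holomorphic_on UNIV"
    and moments: "\<And>k. (\<lambda>n. \<Sum>j\<in>A n. w n j * t n j ^ k) \<longlonglongrightarrow> x ^ k"
    and bound: "\<And>n k. norm (\<Sum>j\<in>A n. w n j * t n j ^ k) \<le> R ^ k"
  shows "(\<lambda>n. \<Sum>j\<in>A n. w n j * G (t n j)) \<longlonglongrightarrow> G x"
proof -
  define c where "c k = (deriv ^^ k) G 0 / fact k" for k
  define \<mu> where "\<mu> n k = (\<Sum>j\<in>A n. w n j * t n j ^ k)" for n k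
  have taylor: "(\<lambda>k. c k * u ^ k) sums G u" for u
  proof -
    have "(\<lambda>k. (deriv ^^ k) G 0 / fact k * (u - 0) ^ k) sums G u"
      by (rule holomorphic_power_series[where r = "norm u + 1"])
         (auto intro: holomorphic_on_subset[OF assms(1)])
    then show ?thesis by (simp add: c_def)
  qed
  have "0 \<le> R"
    using order.trans[OF norm_ge_zero bound[of _ 1]] by simp
  have dominating: "summable (\<lambda>k. norm (c k) * R ^ k)"
    using powser_insidea[OF sums_summable[OF taylor[of "of_real (R + 1)"]], of "of_real R"] \<open>0 \<le> R\<close>
    by (simp add: norm_mult norm_power)
  have expand: "(\<lambda>k. c k * \<mu> n k) sums (\<Sum>j\<in>A n. w n j * G (t n j))" for n
  proof -
    have "(\<lambda>k. \<Sum>j\<in>A n. w n j * (c k * t n j ^ k)) sums (\<Sum>j\<in>A n. w n j * G (t n j))"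
      by (intro sums_sum sums_mult taylor)
    then show ?thesis by (simp add: \<mu>_def sum_distrib_left mult_ac)
  qed
  have "(\<lambda>n. \<Sum>k. c k * \<mu> n k) \<longlonglongrightarrow> (\<Sum>k. c k * x ^ k)"
  proof (rule tannerys_theorem[where M = "\<lambda>k. norm (c k) * R ^ k", THEN conjunct2, THEN conjunct2])
    show "(\<lambda>n. c k * \<mu> n k) \<longlonglongrightarrow> c k * x ^ k" for k
      unfolding \<mu>_def by (intro tendsto_mult_left moments)
    show "\<forall>\<^sub>F (k, n) in at_top \<times>\<^sub>F sequentially. norm (c k * \<mu> n k) \<le> norm (c k) * R ^ k"
      unfolding \<mu>_def using bound by (intro always_eventually) (auto simp: norm_mult mult_left_mono)
  qed (use dominating in auto)
  then show ?thesis
    using expand taylor[of x] by (simp add: sums_iff)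
qed

text \<open>On the imaginary axis the non-holomorphic cnj and cmod in weyl_op can be eliminated;
  what remains is entire in the parameter.\<close>

definition weyl_imaginary_ext :: "(complex \<Rightarrow> complex) \<Rightarrow> complex \<Rightarrow> complex \<Rightarrow> complex" where
  "weyl_imaginary_ext f z w = f (z + \<i> * w / of_real (sqrt 2)) * exp (\<i> * z * w / of_real (sqrt 2) - w ^ 2 / 4)"

lemma weyl_op_imaginary:
  "weyl_op (- \<i> / of_real (sqrt 2) * of_real t) f z = weyl_imaginary_ext f z (of_real t)"
proof -
  have "z - - \<i> / of_real (sqrt 2) * of_real t = z + \<i> * of_real t / of_real (sqrt 2)"
    by simp
  moreover have "z * cnj (- \<i> / of_real (sqrt 2) * of_real t)
      - of_real ((cmod (- \<i> / of_real (sqrt 2) * of_real t))\<^sup>2 / 2)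
      = \<i> * z * of_real t / of_real (sqrt 2) - (of_real t) ^ 2 / 4"
    by (simp add: norm_mult norm_divide power_mult_distrib power_divide)
  ultimately show ?thesis
    unfolding weyl_op_def weyl_imaginary_ext_def by simp
qed

lemma holomorphic_weyl_imaginary_ext:
  assumes "f holomorphic_on UNIV"
  shows "weyl_imaginary_ext f z holomorphic_on UNIV"
proof -
  have "(f \<circ> (\<lambda>w. z + \<i> * w / of_real (sqrt 2))) holomorphic_on UNIV"
    by (rule holomorphic_on_compose[OF _ holomorphic_on_subset[OF assms]])
       (auto intro!: holomorphic_intros)
  then show ?thesis
    unfolding weyl_imaginary_ext_def o_def by (intro holomorphic_intros) auto
qed

theorem proposition3p31:
  fixes a :: real and f :: "complex \<Rightarrow> complex" and z :: complex
  assumes "a > 1" and "f \<in> fock_space"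
  shows "(\<lambda>n. \<Sum>j=0..n. of_real (Cj n j a) *
            weyl_op (- \<i> / of_real (sqrt 2) * of_real (1 - 2 * real j / real n)) f z)
         \<longlonglongrightarrow> weyl_op (- \<i> * of_real a / of_real (sqrt 2)) f z"
proof -
  have "1 \<le> a" using assms(1) by simp
  have moment: "(\<Sum>j=0..n. complex_of_real (Cj n j a) * of_real (1 - 2 * real j / real n) ^ k)
      = of_real (scaled_walk_moment a n k)" for n k
    by (simp add: scaled_walk_moment_def)
  have "f holomorphic_on UNIV" using assms(2) by (simp add: fock_space_def)
  then have "(\<lambda>n. \<Sum>j=0..n. of_real (Cj n j a) * weyl_imaginary_ext f z (of_real (1 - 2 * real j / real n)))
      \<longlonglongrightarrow> weyl_imaginary_ext f z (of_real a)"
  proof (rule tendsto_sum_entire_of_moments[OF holomorphic_weyl_imaginary_ext])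
    show "(\<lambda>n. \<Sum>j=0..n. complex_of_real (Cj n j a) * of_real (1 - 2 * real j / real n) ^ k)
        \<longlonglongrightarrow> of_real a ^ k" for k
      using tendsto_of_real[OF scaled_walk_moment_tendsto[OF \<open>1 \<le> a\<close>, of k]]
      unfolding moment by simp
    show "norm (\<Sum>j=0..n. complex_of_real (Cj n j a) * of_real (1 - 2 * real j / real n) ^ k) \<le> a ^ k" for n k
      unfolding moment norm_of_real by (rule abs_scaled_walk_moment_le[OF \<open>1 \<le> a\<close>])
  qed
  moreover have "weyl_op (- \<i> * of_real a / of_real (sqrt 2)) f z = weyl_imaginary_ext f z (of_real a)"
    using weyl_op_imaginary[of a f z] by simp
  ultimately show ?thesis
    unfolding weyl_op_imaginary by simp
qed

end
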